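(* Consider the discrete-time $Geo^X/G_r^{(a,b)}/1$ queue with single ($\delta=0$) or multiple ($\delta=1$) vacations described in the context, and let $p_{n,0}$, $p_{n,r}(u)$, $Q_n(u)$ be nonnegative numbers satisfying the stationary equations (E1)–(E8) and the normalization condition (N) given there. Then $$\tau:=\sum_{m=0}^{\infty}\sum_{r=a}^{b}p_{m,r}(1)+\sum_{m=0}^{\infty}Q_m(1)=\frac{1-(1-\delta)\sum_{n=0}^{a-1}p_{n,0}}{\omega},$$ where $$\omega=\sum_{n=0}^{a-1}\Big[p^+_nE(V)+\delta Q^+_nE(V)+(1-\delta)Q^+_n\Big\{\sum_{j=n}^{a-1}e_{j,n}\Big(\sum_{i=a}^{b}g_{i-j}s_i+\sum_{i=b+1-j}^{\infty}g_is_b\Big)\Big\}\Big]+\sum_{n=a}^{b}(p^+_n+Q^+_n)s_n+\sum_{n=b+1}^{\infty}(p^+_n+Q^+_n)s_b .$$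
   Context: Time is slotted. Fix integers $1\le a\le b$, a number $\lambda\in(0,1)$ with $\bar\lambda=1-\lambda$, and a group-size distribution $(g_m)_{m\ge1}$ ($g_m\ge0$, $\sum_m g_m=1$, finite mean $\bar g$, pgf $G(z)=\sum_{m\ge1}g_mz^m$); put $g_m=0$ for $m\le0$. In each slot a group of customers arrives with probability $\lambda$, its size having distribution $(g_m)$ (compound Bernoulli arrivals). Service is by the general bulk rule $(a,b)$: service starts only if at least $a$ customers wait; if $r$ wait with $a\le r\le b$ all are taken, if more than $b$ wait exactly $b$ are taken. The service time of a batch of size $r$ ($a\le r\le b$) has pmf $s_r(n)$, $n\ge1$, pgf $S_r^*(z)=\sum_{n\ge1}s_r(n)z^n$ and finite mean $s_r=\sum_n n s_r(n)$; $\mu_b=1/s_b$. Vacation times have pmf $v_n$, $n\ge1$, pgf $V^*(z)=\sum_{n\ge1}v_nz^n$ and finite mean $E(V)$. $\delta=0$ means single vacation (after a vacation, if fewer than $a$ customers wait, the server stays dormant until $a$ have accumulated), $\delta=1$ means multiple vacations (the server keeps taking vacations until at least $a$ wait). It is assumed $\rho=\lambda\bar g/(b\mu_b)<1$. Stationary probabilities: $p_{n,0}$ ($0\le n\le a-1$; server dormant, $n$ waiting), $p_{n,r}(u)$ ($n\ge0$, $a\le r\le b$, $u\ge1$; server busy with a batch of size $r$, $n$ waiting, remaining service time $u$), $Q_n(u)$ ($n\ge0$, $u\ge1$; server on vacation, $n$ waiting, remaining vacation time $u$). They satisfy: (E1) $p_{0,0}=(1-\delta)[\bar\lambda p_{0,0}+\bar\lambda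 Q_0(1)]$; (E2) $p_{n,0}=(1-\delta)[\bar\lambda p_{n,0}+\lambda\sum_{i=1}^ng_ip_{n-i,0}+\bar\lambda Q_n(1)+\lambda\sum_{i=1}^ng_iQ_{n-i}(1)]$, $1\le n\le a-1$; (E3) for $a\le r\le b$, $u\ge1$: $p_{0,r}(u)=\bar\lambda p_{0,r}(u+1)+s_r(u)\big[\sum_{m=a}^b\big(\bar\lambda p_{r,m}(1)+\lambda\sum_{i=1}^rg_ip_{r-i,m}(1)\big)+\bar\lambda Q_r(1)+\lambda\sum_{i=1}^rg_iQ_{r-i}(1)+(1-\delta)\lambda\sum_{i=0}^{a-1}g_{r-i}p_{i,0}\big]$; (E4) for $n\ge1$, $a\le r\le b-1$, $u\ge1$: $p_{n,r}(u)=\bar\lambda p_{n,r}(u+1)+\lambda\sum_{i=1}^ng_ip_{n-i,r}(u+1)$; (E5) for $n\ge1$, $u\ge1$: $p_{n,b}(u)=\bar\lambda p_{n,b}(u+1)+\lambda\sum_{i=1}^ng_ip_{n-i,b}(u+1)+s_b(u)\big[\sum_{m=a}^b\big(\bar\lambda p_{n+b,m}(1)+\lambda\sum_{i=1}^{n+b}g_ip_{n+b-i,m}(1)\big)+\bar\lambda Q_{n+b}(1)+\lambda\sum_{i=1}^{n+b}g_iQ_{n+b-i}(1)+(1-\delta)\lambda\sum_{i=0}^{a-1}g_{n+b-i}p_{i,0}\big]$; (E6) $Q_0(u)=\bar\lambda Q_0(u+1)+\bar\lambda\big(\sum_{m=a}^bp_{0,m}(1)+\delta Q_0(1)\big)v_u$;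 (E7) for $1\le n\le a-1$: $Q_n(u)=\bar\lambda Q_n(u+1)+\lambda\sum_{i=1}^ng_iQ_{n-i}(u+1)+v_u\big[\bar\lambda\big(\sum_{m=a}^bp_{n,m}(1)+\delta Q_n(1)\big)+\lambda\sum_{i=1}^ng_i\big(\sum_{m=a}^bp_{n-i,m}(1)+\delta Q_{n-i}(1)\big)\big]$; (E8) for $n\ge a$: $Q_n(u)=\bar\lambda Q_n(u+1)+\lambda\sum_{i=1}^ng_iQ_{n-i}(u+1)$; (N) $(1-\delta)\sum_{n=0}^{a-1}p_{n,0}+\sum_{n\ge0}\sum_{r=a}^b\sum_{u\ge1}p_{n,r}(u)+\sum_{n\ge0}\sum_{u\ge1}Q_n(u)=1$. Probabilities at service-completion / vacation-termination epochs: with $\tau$ as in the claim, $p^+_{0,r}=\tau^{-1}\bar\lambda p_{0,r}(1)$, $p^+_{n,r}=\tau^{-1}(\bar\lambda p_{n,r}(1)+\lambda\sum_{i=1}^ng_ip_{n-i,r}(1))$ for $n\ge1$, $a\le r\le b$; $p^+_n=\sum_{r=a}^bp^+_{n,r}$; $Q^+_0=\tau^{-1}\bar\lambda Q_0(1)$, $Q^+_n=\tau^{-1}(\bar\lambda Q_n(1)+\lambda\sum_{i=1}^ng_iQ_{n-i}(1))$ for $n\ge1$. The numbers $e_{n,i}$ ($0\le i\le n$) are defined by $e_{n,n}=1$, $e_{n,n-1}=g_1$, and $e_{n,i}=\sum_{j=i+1}^{n-1}e_{n,j}g_{j-i}+g_{n-i}$ for $0\le i\le n-2$. *)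

theory Defs
  imports "HOL-Analysis.Analysis"
begin

text \<open>The case i = n-1 coincides with the general recursion (empty sum plus g_1).
  Values for i > n are irrelevant and set to 0.\<close>

function e_coef :: "(nat \<Rightarrow> real) \<Rightarrow> nat \<Rightarrow> nat \<Rightarrow> real" where
  "e_coef g n i =
     (if n < i then 0
      else if i = n then 1
      else (\<Sum>j\<in>{i+1..<n}. e_coef g n j * g (j - i)) + g (n - i))"
  by pat_completeness auto
termination
  by (relation "Wellfounded.measure (\<lambda>(g, n, i). n - i)") auto

definition mean_of :: "(nat \<Rightarrow> real) \<Rightarrow> real" where
  "mean_of f = (\<Sum>n. real n * f n)"

definition tau_of :: "nat \<Rightarrow> nat \<Rightarrow> (nat \<Rightarrow> nat \<Rightarrow> nat \<Rightarrow> real) \<Rightarrow> (nat \<Rightarrow> nat \<Rightarrow> real) \<Rightarrow> real" where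
  "tau_of a b p Q = (\<Sum>m. \<Sum>r=a..b. p m r 1) + (\<Sum>m. Q m 1)"

text \<open>p^+_n = sum_{r=a}^b p^+_{n,r}; for n = 0 the inner sum over i is empty,
  so the single formula covers both cases of the paper.\<close>
definition pplus :: "nat \<Rightarrow> nat \<Rightarrow> real \<Rightarrow> (nat \<Rightarrow> real) \<Rightarrow> real \<Rightarrow> (nat \<Rightarrow> nat \<Rightarrow> nat \<Rightarrow> real) \<Rightarrow> nat \<Rightarrow> real" where
  "pplus a b lam g \<tau> p n = (\<Sum>r=a..b. (1 / \<tau>) *
      ((1 - lam) * p n r 1 + lam * (\<Sum>i=1..n. g i * p (n - i) r 1)))"

definition Qplus :: "real \<Rightarrow> (nat \<Rightarrow> real) \<Rightarrow> real \<Rightarrow> (nat \<Rightarrow> nat \<Rightarrow> real) \<Rightarrow> nat \<Rightarrow> real" where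
  "Qplus lam g \<tau> Q n = (1 / \<tau>) * ((1 - lam) * Q n 1 + lam * (\<Sum>i=1..n. g i * Q (n - i) 1))"

definition omega_of :: "nat \<Rightarrow> nat \<Rightarrow> real \<Rightarrow> real \<Rightarrow> (nat \<Rightarrow> real) \<Rightarrow> (nat \<Rightarrow> nat \<Rightarrow> real)
    \<Rightarrow> (nat \<Rightarrow> real) \<Rightarrow> (nat \<Rightarrow> nat \<Rightarrow> nat \<Rightarrow> real) \<Rightarrow> (nat \<Rightarrow> nat \<Rightarrow> real) \<Rightarrow> real" where
  "omega_of a b lam \<delta> g s v p Q =
    (let \<tau> = tau_of a b p Q; EV = mean_of v; sm = (\<lambda>r. mean_of (s r));
         pp = pplus a b lam g \<tau> p; qp = Qplus lam g \<tau> Q in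
     (\<Sum>n=0..a-1.
        pp n * EV + \<delta> * qp n * EV
        + (1 - \<delta>) * qp n *
            (\<Sum>j=n..a-1. e_coef g j n *
               ((\<Sum>i=a..b. g (i - j) * sm i) + (\<Sum>k. g (k + (b + 1 - j)) * sm b))))
     + (\<Sum>n=a..b. (pp n + qp n) * sm n)
     + (\<Sum>k. (pp (k + (b + 1)) + qp (k + (b + 1))) * sm b))"

end

theory Submission
  imports Defs
begin

text \<open>Summing the balance equations (E3)-(E8) over the queue length n turns the block of each
  batch size r, and the vacation block, into a scalar recursion X(u) = X(u + 1) + w(u) c in the
  remaining time u, where w is the service or vacation time distribution and c the rate at
  which such periods start. As X is nonnegative and summable, Abel summation gives
  \<Sum>u\<ge>1. X(u) = c E(w). So the busy mass PB and the vacation mass PQ are combinations of mean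
  service and vacation times, weighted by tau p+_n, tau Q+_n and, for single vacations, by the rate
  at which arrivals end a dormant period. The dormant probabilities solve the renewal equations
  (E1)-(E2), whose resolvent is given by the coefficients e_{j,n}; this expresses the last weight
  through the Q+_n as well. Altogether PB + PQ = tau omega, and (N) yields the formula.\<close>

declare e_coef.simps [simp del]

section \<open>Series over queue length and remaining time\<close>

lemma has_sum_columns:
  fixes F :: "nat \<Rightarrow> nat \<Rightarrow> real"
  assumes "((\<lambda>(n, u). F n u) has_sum S) (UNIV \<times> {1..})"
  shows "1 \<le> u \<Longrightarrow> summable (\<lambda>n. F n u)"
    and "(\<lambda>u. \<Sum>n. F n (Suc u)) sums S"
proof -
  have swapped: "((\<lambda>(u, n). F n u) has_sum S) ({1..} \<times> UNIV)"
    using assms by (subst (asm) has_sum_swap) simp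
  have column: "((\<lambda>n. F n u) has_sum (\<Sum>n. F n u)) UNIV" if "1 \<le> u" for u
  proof -
    have "(\<lambda>n. F n u) summable_on UNIV"
      using summable_on_SigmaD1[of "\<lambda>u n. F n u" "{1..}" "\<lambda>_. UNIV"] swapped that
      by (auto simp: summable_on_def)
    then show ?thesis
      by (metis has_sum_imp_sums has_sum_infsum sums_unique)
  qed
  then show "1 \<le> u \<Longrightarrow> summable (\<lambda>n. F n u)"
    using has_sum_imp_sums sums_summable by blast
  have "((\<lambda>u. \<Sum>n. F n u) has_sum S) {1..}"
    using has_sum_Sigma'[OF swapped[unfolded case_prod_unfold]] column by auto
  moreover have "bij_betw Suc UNIV {1::nat..}"
    by (rule bij_betwI[of _ _ _ "\<lambda>n. n - 1"]) auto
  ultimately have "((\<lambda>u. \<Sum>n. F n (Suc u)) has_sum S) UNIV"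
    using has_sum_reindex_bij_betw[of Suc UNIV "{1..}" "\<lambda>u. \<Sum>n. F n u" S] by simp
  then show "(\<lambda>u. \<Sum>n. F n (Suc u)) sums S"
    by (rule has_sum_imp_sums)
qed

lemma has_sum_columns_first_le:
  fixes F :: "nat \<Rightarrow> nat \<Rightarrow> real"
  assumes F_nonneg: "\<And>n u. 1 \<le> u \<Longrightarrow> 0 \<le> F n u"
    and F_sum: "((\<lambda>(n, u). F n u) has_sum S) (UNIV \<times> {1..})"
  shows "(\<Sum>n. F n 1) \<le> S"
proof -
  have sums: "(\<lambda>u. \<Sum>n. F n (Suc u)) sums S"
    by (rule has_sum_columns(2)[OF F_sum])
  have "0 \<le> (\<Sum>n. F n (Suc u))" for u
    using F_nonneg has_sum_columns(1)[OF F_sum] by (simp add: suminf_nonneg)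
  then have "(\<Sum>u\<in>{0}. \<Sum>n. F n (Suc u)) \<le> (\<Sum>u. \<Sum>n. F n (Suc u))"
    by (intro sum_le_suminf sums_summable[OF sums]) simp_all
  then show ?thesis
    using sums_unique[OF sums] by simp
qed

lemma has_sum_split_finite_middle:
  fixes F :: "'a \<Rightarrow> 'b \<Rightarrow> 'c \<Rightarrow> real"
  assumes "((\<lambda>(n, r, u). F n r u) has_sum S) (A \<times> R \<times> B)" and "finite R"
  obtains W where "\<And>r. r \<in> R \<Longrightarrow> ((\<lambda>(n, u). F n r u) has_sum W r) (A \<times> B)"
    and "S = sum W R"
proof -
  have bij: "bij_betw (\<lambda>(r, n, u). (n, r, u)) (R \<times> A \<times> B) (A \<times> R \<times> B)"
    by (rule bij_betwI[of _ _ _ "\<lambda>(n, r, u). (r, n, u)"]) auto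
  have swapped: "((\<lambda>(r, n, u). F n r u) has_sum S) (R \<times> A \<times> B)"
    using has_sum_reindex_bij_betw[OF bij, of "\<lambda>(n, r, u). F n r u" S] assms(1)
    by (simp add: case_prod_unfold)
  define W where "W r = infsum (\<lambda>(n, u). F n r u) (A \<times> B)" for r
  have W: "((\<lambda>(n, u). F n r u) has_sum W r) (A \<times> B)" if "r \<in> R" for r
  proof -
    have "(\<lambda>(n, u). F n r u) summable_on (A \<times> B)"
      using summable_on_SigmaD1[of "\<lambda>r (n, u). F n r u" R "\<lambda>_. A \<times> B", OF _ that] swapped
      by (auto simp: summable_on_def case_prod_unfold)
    then show ?thesis
      unfolding W_def by (rule has_sum_infsum)
  qed
  have "(W has_sum S) R"
    using has_sum_Sigma'[of "\<lambda>(r, nu). case nu of (n, u) \<Rightarrow> F n r u"] swapped W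
    by (auto simp: case_prod_unfold)
  then have "S = sum W R"
    using assms(2) has_sum_finite has_sum_unique by blast
  with W that show ?thesis by blast
qed

lemma sums_convolution_pmf:
  fixes g x :: "nat \<Rightarrow> real"
  assumes "\<And>n. 0 \<le> g n" "g 0 = 0" "g sums 1" and "\<And>n. 0 \<le> x n" "summable x"
  shows "(\<lambda>n. \<Sum>i=1..n. g i * x (n - i)) sums suminf x"
proof -
  have "(\<lambda>n. \<Sum>i\<le>n. g i * x (n - i)) sums ((\<Sum>n. g n) * suminf x)"
    by (rule Cauchy_product_sums) (use assms in \<open>auto simp: sums_iff\<close>)
  moreover have "(\<Sum>i\<le>n. g i * x (n - i)) = (\<Sum>i=1..n. g i * x (n - i))" for n
    using \<open>g 0 = 0\<close> by (simp add: atMost_atLeast0 sum.atLeast_Suc_atMost)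
  ultimately show ?thesis
    using \<open>g sums 1\<close> by (simp add: sums_iff)
qed

lemma sums_arrival_step:
  fixes g x :: "nat \<Rightarrow> real"
  assumes "\<And>n. 0 \<le> g n" "g 0 = 0" "g sums 1" and "\<And>n. 0 \<le> x n" "summable x"
  shows "(\<lambda>n. (1 - lam) * x n + lam * (\<Sum>i=1..n. g i * x (n - i))) sums suminf x"
proof -
  have "(\<lambda>n. (1 - lam) * x n + lam * (\<Sum>i=1..n. g i * x (n - i)))
      sums ((1 - lam) * suminf x + lam * suminf x)"
    by (intro sums_add sums_mult summable_sums sums_convolution_pmf) (use assms in auto)
  then show ?thesis
    by (simp add: algebra_simps)
qed

lemma summable_finite_convolution:
  fixes g x :: "nat \<Rightarrow> real"
  assumes "summable g"
  shows "summable (\<lambda>r. \<Sum>i\<in>I. g (r - i) * x i)"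
proof -
  have "summable (\<lambda>r. g (r - i))" for i
    using summable_iff_shift[of "\<lambda>r. g (r - i)" i] assms by simp
  then show ?thesis
    by (intro summable_sum summable_mult2)
qed

lemma LIMSEQ_real_mult_summable_eq_0:
  fixes f :: "nat \<Rightarrow> real"
  assumes "\<And>n. 0 \<le> f n" "summable f" and lim: "(\<lambda>n. real n * f n) \<longlonglongrightarrow> L"
  shows "L = 0"
proof (rule ccontr)
  have "0 \<le> L"
    by (rule LIMSEQ_le_const[OF lim]) (use assms(1) in auto)
  moreover assume "L \<noteq> 0"
  ultimately have "0 < L" by simp
  have "eventually (\<lambda>n. L / 2 < real n * f n) sequentially"
    using order_tendstoD(1)[OF lim, of "L / 2"] \<open>0 < L\<close> by simp
  then have "eventually (\<lambda>n. norm (inverse (real n)) \<le> 2 / L * f n) sequentially"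
  proof (rule eventually_mono)
    fix n assume "L / 2 < real n * f n"
    with \<open>0 < L\<close> assms(1)[of n] show "norm (inverse (real n)) \<le> 2 / L * f n"
      by (cases "n = 0") (simp_all add: field_simps)
  qed
  then have "summable (\<lambda>n. inverse (real n))"
    by (rule summable_comparison_test_ev) (intro summable_mult assms(2))
  then show False
    using not_summable_harmonic[where 'a=real] by simp
qed

(* Abel summation: the partial sums are c * (\<Sum>n\<le>N. n * w n) + N * f (N + 1). *)
lemma sums_residual_recursion:
  fixes f w :: "nat \<Rightarrow> real"
  assumes f_nonneg: "\<And>u. 1 \<le> u \<Longrightarrow> 0 \<le> f u" and f_summable: "summable (\<lambda>u. f (Suc u))"
    and rec: "\<And>u. 1 \<le> u \<Longrightarrow> f u = f (Suc u) + w u * c"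
    and w: "w 0 = 0" "summable (\<lambda>n. real n * w n)"
  shows "(\<lambda>u. f (Suc u)) sums (c * mean_of w)"
proof -
  have partial: "(\<Sum>u<N. f (Suc u)) = c * (\<Sum>n<Suc N. real n * w n) + real N * f (Suc N)" for N
  proof (induction N)
    case (Suc N)
    then show ?case
      using rec[of "Suc N"] by (simp add: algebra_simps)
  qed (simp add: w)
  have "(\<lambda>N. \<Sum>u<N. f (Suc u)) \<longlonglongrightarrow> (\<Sum>u. f (Suc u))"
    using f_summable by (rule summable_LIMSEQ)
  moreover have "(\<lambda>N. \<Sum>n<Suc N. real n * w n) \<longlonglongrightarrow> mean_of w"
    unfolding mean_of_def using w(2) by (intro LIMSEQ_Suc summable_LIMSEQ)
  ultimately have "(\<lambda>N. (\<Sum>u<N. f (Suc u)) - c * (\<Sum>n<Suc N. real n * w n))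
      \<longlonglongrightarrow> (\<Sum>u. f (Suc u)) - c * mean_of w"
    by (intro tendsto_diff tendsto_mult_left)
  then have "(\<lambda>N. real N * f (Suc N)) \<longlonglongrightarrow> (\<Sum>u. f (Suc u)) - c * mean_of w"
    by (simp add: partial)
  then have "(\<Sum>u. f (Suc u)) - c * mean_of w = 0"
    by (rule LIMSEQ_real_mult_summable_eq_0[rotated 2]) (simp_all add: f_nonneg f_summable)
  then show ?thesis
    using f_summable by (simp add: sums_iff)
qed

lemma has_sum_residual_recursion:
  fixes x :: "nat \<Rightarrow> nat \<Rightarrow> real" and g w c :: "nat \<Rightarrow> real"
  assumes g: "\<And>n. 0 \<le> g n" "g 0 = 0" "g sums 1"
    and w: "w 0 = 0" "summable (\<lambda>n. real n * w n)"
    and x_nonneg: "\<And>n u. 1 \<le> u \<Longrightarrow> 0 \<le> x n u"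
    and x_sum: "((\<lambda>(n, u). x n u) has_sum S) (UNIV \<times> {1..})"
    and c: "summable c"
    and rec: "\<And>n u. 1 \<le> u \<Longrightarrow> x n u =
      (1 - lam) * x n (Suc u) + lam * (\<Sum>i=1..n. g i * x (n - i) (Suc u)) + w u * c n"
  shows "S = suminf c * mean_of w"
proof -
  define X where "X u = (\<Sum>n. x n u)" for u
  have step: "X u = X (Suc u) + w u * suminf c" if "1 \<le> u" for u
  proof -
    have "(\<lambda>n. (1 - lam) * x n (Suc u) + lam * (\<Sum>i=1..n. g i * x (n - i) (Suc u)) + w u * c n)
        sums (X (Suc u) + w u * suminf c)"
      unfolding X_def using has_sum_columns(1)[OF x_sum]
      by (intro sums_add sums_mult summable_sums c sums_arrival_step g x_nonneg) auto
    then have "(\<lambda>n. x n u) sums (X (Suc u) + w u * suminf c)"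
      by (simp add: rec[OF that])
    then show ?thesis
      by (simp add: X_def sums_iff)
  qed
  have X_sums: "(\<lambda>u. X (Suc u)) sums S"
    unfolding X_def by (rule has_sum_columns(2)[OF x_sum])
  have X_nonneg: "0 \<le> X u" if "1 \<le> u" for u
    unfolding X_def using that has_sum_columns(1)[OF x_sum] x_nonneg by (simp add: suminf_nonneg)
  have "(\<lambda>u. X (Suc u)) sums (suminf c * mean_of w)"
    using X_nonneg sums_summable[OF X_sums] step w by (rule sums_residual_recursion)
  with X_sums show ?thesis
    using sums_unique2 by blast
qed

section \<open>Renewal coefficients\<close>

lemma sum_swap_below_antidiagonal:
  fixes F :: "nat \<Rightarrow> nat \<Rightarrow> 'a::comm_monoid_add"
  shows "(\<Sum>i=1..j. \<Sum>n=0..j-i. F i n) = (\<Sum>n=0..j. \<Sum>i=1..j-n. F i n)"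
proof -
  have "(\<Sum>i=1..j. \<Sum>n=0..j-i. F i n) = (\<Sum>i\<in>{1..j}. \<Sum>n\<in>{n\<in>{0..j}. i + n \<le> j}. F i n)"
    by (intro sum.cong refl) (auto intro!: sum.cong)
  also have "\<dots> = (\<Sum>n\<in>{0..j}. \<Sum>i\<in>{i\<in>{1..j}. i + n \<le> j}. F i n)"
    by (rule sum.swap_restrict) auto
  also have "\<dots> = (\<Sum>n=0..j. \<Sum>i=1..j-n. F i n)"
    by (intro sum.cong refl) (auto intro!: sum.cong)
  finally show ?thesis .
qed

lemma sum_swap_below_diagonal:
  fixes F :: "nat \<Rightarrow> nat \<Rightarrow> 'a::comm_monoid_add"
  shows "(\<Sum>i=0..m. \<Sum>n=0..i. F i n) = (\<Sum>n=0..m. \<Sum>i=n..m. F i n)"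
proof -
  have "(\<Sum>i=0..m. \<Sum>n=0..i. F i n) = (\<Sum>i\<in>{0..m}. \<Sum>n\<in>{n\<in>{0..m}. n \<le> i}. F i n)"
    by (intro sum.cong refl) (auto intro!: sum.cong)
  also have "\<dots> = (\<Sum>n\<in>{0..m}. \<Sum>i\<in>{i\<in>{0..m}. n \<le> i}. F i n)"
    by (rule sum.swap_restrict) auto
  also have "\<dots> = (\<Sum>n=0..m. \<Sum>i=n..m. F i n)"
    by (intro sum.cong refl) (auto intro!: sum.cong)
  finally show ?thesis .
qed

lemma e_coef_diag [simp]: "e_coef g n n = 1"
  by (subst e_coef.simps) simp

lemma e_coef_translate: "e_coef g (n + m) n = e_coef g m 0"
proof (induction m arbitrary: n rule: less_induct)
  case (less m)
  show ?case
  proof (cases "m = 0")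
    case False
    have "e_coef g (n + m) n = (\<Sum>j\<in>{n+1..<n+m}. e_coef g (n + m) j * g (j - n)) + g m"
      using False by (subst e_coef.simps) simp
    also have "(\<Sum>j\<in>{n+1..<n+m}. e_coef g (n + m) j * g (j - n))
        = (\<Sum>t\<in>{1..<m}. e_coef g (n + m) (n + t) * g t)"
      using sum.shift_bounds_nat_ivl[of "\<lambda>j. e_coef g (n + m) j * g (j - n)" 1 n m]
      by (simp add: add.commute)
    also have "\<dots> = (\<Sum>t\<in>{1..<m}. e_coef g m t * g t)"
    proof (intro sum.cong refl)
      fix t assume "t \<in> {1..<m}"
      then have "e_coef g ((n + t) + (m - t)) (n + t) = e_coef g (t + (m - t)) t"
        using less.IH[of "m - t" "n + t"] less.IH[of "m - t" t] by simp
      with \<open>t \<in> {1..<m}\<close> show "e_coef g (n + m) (n + t) * g t = e_coef g m t * g t"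
        by simp
    qed
    also have "(\<Sum>t\<in>{1..<m}. e_coef g m t * g t) + g m = e_coef g m 0"
      by (rule sym, subst e_coef.simps) (use False in simp)
    finally show ?thesis .
  qed simp
qed

lemma e_coef_eq_e_coef_0: "i \<le> n \<Longrightarrow> e_coef g n i = e_coef g (n - i) 0"
  using e_coef_translate[of g i "n - i"] by simp

lemma e_coef_renewal:
  assumes "i < n"
  shows "e_coef g n i = (\<Sum>t=1..n-i. g t * e_coef g (n - t) i)"
proof -
  have "e_coef g n i = e_coef g (n - i) 0"
    using assms by (rule e_coef_eq_e_coef_0[OF less_imp_le])
  also have "\<dots> = (\<Sum>t\<in>{1..<n-i}. e_coef g (n - i) t * g t) + g (n - i)"
    using assms by (subst e_coef.simps) simp
  also have "\<dots> = (\<Sum>t\<in>{1..<n-i}. g t * e_coef g (n - t) i) + g (n - i) * e_coef g (n - (n - i)) i"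
  proof -
    have "e_coef g (n - i) t = e_coef g (n - t) i" if "t \<in> {1..<n-i}" for t
    proof -
      from that have "t \<le> n - i" "i \<le> n - t"
        by auto
      then show ?thesis
        using e_coef_eq_e_coef_0[of t "n - i" g] e_coef_eq_e_coef_0[of i "n - t" g]
        by (simp add: add.commute)
    qed
    then show ?thesis
      using assms by (auto simp: mult.commute intro!: sum.cong)
  qed
  also have "\<dots> = (\<Sum>t=1..n-i. g t * e_coef g (n - t) i)"
    using assms by (simp add: sum.last_plus)
  finally show ?thesis .
qed

lemma renewal_equation_solution:
  fixes x y g :: "nat \<Rightarrow> real"
  assumes rec: "\<And>j. j \<le> K \<Longrightarrow> x j = (\<Sum>i=1..j. g i * x (j - i)) + y j"
  shows "j \<le> K \<Longrightarrow> x j = (\<Sum>n=0..j. e_coef g j n * y n)"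
proof (induction j rule: less_induct)
  case (less j)
  have "x j = (\<Sum>i=1..j. \<Sum>n=0..j-i. g i * e_coef g (j - i) n * y n) + y j"
    using rec[OF less.prems] less.IH less.prems
    by (auto simp: sum_distrib_left mult.assoc intro!: sum.cong)
  also have "(\<Sum>i=1..j. \<Sum>n=0..j-i. g i * e_coef g (j - i) n * y n)
      = (\<Sum>n=0..j. (\<Sum>i=1..j-n. g i * e_coef g (j - i) n) * y n)"
    by (subst sum_swap_below_antidiagonal) (simp add: sum_distrib_right)
  also have "\<dots> = (\<Sum>n=0..j. (if n = j then 0 else e_coef g j n) * y n)"
  proof (rule sum.cong)
    fix n assume "n \<in> {0..j}"
    then show "(\<Sum>i=1..j-n. g i * e_coef g (j - i) n) * y n
        = (if n = j then 0 else e_coef g j n) * y n"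
      using e_coef_renewal[of n j g] by auto
  qed simp
  finally show ?case
    by (simp add: sum.last_plus[of 0 j] add.commute)
qed

section \<open>Busy and vacation masses\<close>

(* The term in braces in omega, where m r is the mean service time of a batch of size r. *)
definition batch_start_mean :: "nat \<Rightarrow> nat \<Rightarrow> (nat \<Rightarrow> real) \<Rightarrow> (nat \<Rightarrow> real) \<Rightarrow> nat \<Rightarrow> real" where
  "batch_start_mean a b g m j = (\<Sum>i=a..b. g (i - j) * m i) + (\<Sum>k. g (k + (b + 1 - j)) * m b)"

lemma dormant_exit_mean:
  fixes g x y m :: "nat \<Rightarrow> real"
  assumes "a \<le> b" and "summable g"
    and rec: "\<And>j. j \<le> a - 1 \<Longrightarrow> x j = (\<Sum>i=1..j. g i * x (j - i)) + y j"
  shows "(\<Sum>r=a..b. (\<Sum>i=0..a-1. g (r - i) * x i) * m r)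
      + (\<Sum>k. \<Sum>i=0..a-1. g (k + (b + 1) - i) * x i) * m b
    = (\<Sum>n=0..a-1. y n * (\<Sum>j=n..a-1. e_coef g j n * batch_start_mean a b g m j))"
proof -
  have tail: "summable (\<lambda>k. g (k + c))" for c
    using \<open>summable g\<close> by (rule summable_ignore_initial_segment)
  have exit_tail: "(\<Sum>k. \<Sum>i=0..a-1. g (k + (b + 1) - i) * x i) * m b
      = (\<Sum>i=0..a-1. x i * (\<Sum>k. g (k + (b + 1 - i)) * m b))"
  proof -
    have "(\<Sum>k. \<Sum>i=0..a-1. g (k + (b + 1) - i) * x i) = (\<Sum>k. \<Sum>i=0..a-1. g (k + (b + 1 - i)) * x i)"
      using \<open>a \<le> b\<close> by (intro suminf_cong sum.cong) auto
    also have "\<dots> = (\<Sum>i=0..a-1. \<Sum>k. g (k + (b + 1 - i)) * x i)"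
      by (intro suminf_sum summable_mult2 tail)
    also have "\<dots> = (\<Sum>i=0..a-1. (\<Sum>k. g (k + (b + 1 - i))) * x i)"
      by (intro sum.cong refl suminf_mult2 [symmetric] tail)
    finally have "(\<Sum>k. \<Sum>i=0..a-1. g (k + (b + 1) - i) * x i) * m b
        = (\<Sum>i=0..a-1. (\<Sum>k. g (k + (b + 1 - i))) * x i) * m b"
      by (rule arg_cong)
    also have "\<dots> = (\<Sum>i=0..a-1. x i * ((\<Sum>k. g (k + (b + 1 - i))) * m b))"
      by (simp add: sum_distrib_left sum_distrib_right mult_ac)
    also have "\<dots> = (\<Sum>i=0..a-1. x i * (\<Sum>k. g (k + (b + 1 - i)) * m b))"
      by (intro sum.cong refl arg_cong2[where f = "(*)"] suminf_mult2 tail)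
    finally show ?thesis .
  qed
  have "(\<Sum>r=a..b. (\<Sum>i=0..a-1. g (r - i) * x i) * m r)
      + (\<Sum>k. \<Sum>i=0..a-1. g (k + (b + 1) - i) * x i) * m b
      = (\<Sum>i=0..a-1. x i * batch_start_mean a b g m i)"
  proof -
    have "(\<Sum>r=a..b. (\<Sum>i=0..a-1. g (r - i) * x i) * m r)
        = (\<Sum>i=0..a-1. x i * (\<Sum>r=a..b. g (r - i) * m r))"
      unfolding sum_distrib_left sum_distrib_right by (subst sum.swap) (simp add: mult_ac)
    then show ?thesis
      unfolding exit_tail batch_start_mean_def by (simp add: distrib_left sum.distrib)
  qed
  also have "\<dots> = (\<Sum>i=0..a-1. \<Sum>n=0..i. e_coef g i n * y n * batch_start_mean a b g m i)"
    using renewal_equation_solution[of "a - 1" x g y, OF rec]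
    by (simp add: sum_distrib_right)
  also have "\<dots> = (\<Sum>n=0..a-1. y n * (\<Sum>j=n..a-1. e_coef g j n * batch_start_mean a b g m j))"
    by (simp add: sum_swap_below_diagonal sum_distrib_left mult_ac)
  finally show ?thesis .
qed

lemma single_vacation_renewal:
  fixes lam \<delta> :: real and g p0 :: "nat \<Rightarrow> real" and Q :: "nat \<Rightarrow> nat \<Rightarrow> real"
  assumes "\<delta> = 0"
    and E1: "p0 0 = (1 - \<delta>) * ((1 - lam) * p0 0 + (1 - lam) * Q 0 1)"
    and E2: "\<And>n. 1 \<le> n \<Longrightarrow> n \<le> a - 1 \<Longrightarrow>
       p0 n = (1 - \<delta>) * ((1 - lam) * p0 n + lam * (\<Sum>i=1..n. g i * p0 (n - i))
                + (1 - lam) * Q n 1 + lam * (\<Sum>i=1..n. g i * Q (n - i) 1))"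
    and "j \<le> a - 1"
  shows "lam * p0 j = (\<Sum>i=1..j. g i * (lam * p0 (j - i))) + Qplus lam g 1 Q j"
proof (cases "j = 0")
  case True
  then show ?thesis
    using E1 \<open>\<delta> = 0\<close> by (simp add: Qplus_def algebra_simps)
next
  case False
  then show ?thesis
    using E2[of j] \<open>j \<le> a - 1\<close> \<open>\<delta> = 0\<close> by (simp add: Qplus_def sum_distrib_left algebra_simps)
qed

(* c n is the bracket of (E3) and (E5): the rate of service starts with n customers waiting. *)
lemma busy_mass_formula:
  fixes p :: "nat \<Rightarrow> nat \<Rightarrow> nat \<Rightarrow> real" and s :: "nat \<Rightarrow> nat \<Rightarrow> real" and g c :: "nat \<Rightarrow> real"
  assumes "a \<le> b"
    and g: "\<And>n. 0 \<le> g n" "g 0 = 0" "g sums 1"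
    and s: "\<And>r. a \<le> r \<Longrightarrow> r \<le> b \<Longrightarrow> s r 0 = 0"
      "\<And>r. a \<le> r \<Longrightarrow> r \<le> b \<Longrightarrow> summable (\<lambda>n. real n * s r n)"
    and p_nonneg: "\<And>n r u. a \<le> r \<Longrightarrow> r \<le> b \<Longrightarrow> 1 \<le> u \<Longrightarrow> 0 \<le> p n r u"
    and p_sum: "((\<lambda>(n, r, u). p n r u) has_sum PB) (UNIV \<times> {a..b} \<times> {1..})"
    and c: "summable c"
    and rec_empty: "\<And>r u. a \<le> r \<Longrightarrow> r \<le> b \<Longrightarrow> 1 \<le> u \<Longrightarrow>
      p 0 r u = (1 - lam) * p 0 r (u + 1) + s r u * c r"
    and rec_partial: "\<And>n r u. 1 \<le> n \<Longrightarrow> a \<le> r \<Longrightarrow> r < b \<Longrightarrow> 1 \<le> u \<Longrightarrow>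
      p n r u = (1 - lam) * p n r (u + 1) + lam * (\<Sum>i=1..n. g i * p (n - i) r (u + 1))"
    and rec_full: "\<And>n u. 1 \<le> n \<Longrightarrow> 1 \<le> u \<Longrightarrow>
      p n b u = (1 - lam) * p n b (u + 1) + lam * (\<Sum>i=1..n. g i * p (n - i) b (u + 1))
        + s b u * c (n + b)"
  shows "PB = (\<Sum>r=a..b. c r * mean_of (s r)) + (\<Sum>k. c (k + (b + 1))) * mean_of (s b)"
proof -
  obtain W where W: "\<And>r. r \<in> {a..b} \<Longrightarrow> ((\<lambda>(n, u). p n r u) has_sum W r) (UNIV \<times> {1..})"
    and PB: "PB = sum W {a..b}"
    using has_sum_split_finite_middle[OF p_sum] by blast
  have W_partial: "W r = c r * mean_of (s r)" if r: "a \<le> r" "r < b" for r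
  proof -
    have "W r = (\<Sum>n. if n = 0 then c r else 0) * mean_of (s r)"
    proof (rule has_sum_residual_recursion[OF g, where x = "\<lambda>n u. p n r u"])
      fix n u :: nat assume "1 \<le> u"
      then show "p n r u = (1 - lam) * p n r (Suc u) + lam * (\<Sum>i=1..n. g i * p (n - i) r (Suc u))
          + s r u * (if n = 0 then c r else 0)"
        using rec_empty[of r u] rec_partial[of n r u] r by (cases "n = 0") simp_all
    qed (use r s p_nonneg W in auto)
    then show ?thesis
      using sums_unique[OF sums_single[of 0 "\<lambda>_. c r"]] by simp
  qed
  have W_full: "W b = (\<Sum>n. c (n + b)) * mean_of (s b)"
  proof (rule has_sum_residual_recursion[OF g, where x = "\<lambda>n u. p n b u"])
    fix n u :: nat assume "1 \<le> u"
    then show "p n b u = (1 - lam) * p n b (Suc u) + lam * (\<Sum>i=1..n. g i * p (n - i) b (Suc u))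
        + s b u * c (n + b)"
      using rec_empty[of b u] rec_full[of n u] \<open>a \<le> b\<close> by (cases "n = 0") simp_all
  qed (use \<open>a \<le> b\<close> s p_nonneg W c in auto)
  have "(\<Sum>n. c (n + b)) = c b + (\<Sum>k. c (k + (b + 1)))"
    using suminf_split_head[of "\<lambda>n. c (n + b)"] c by simp
  then show ?thesis
    using \<open>a \<le> b\<close> W_partial
    by (simp add: PB W_full sum.last_plus algebra_simps)
qed

lemma pplus_one_eq:
  "pplus a b lam g 1 p n
    = (1 - lam) * (\<Sum>m=a..b. p n m 1) + lam * (\<Sum>i=1..n. g i * (\<Sum>m=a..b. p (n - i) m 1))"
  by (simp add: pplus_def sum.distrib sum_distrib_left sum.swap[of _ "{a..b}"] mult_ac)

lemma vacation_mass_formula: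
  fixes Q :: "nat \<Rightarrow> nat \<Rightarrow> real" and p :: "nat \<Rightarrow> nat \<Rightarrow> nat \<Rightarrow> real" and g v :: "nat \<Rightarrow> real"
  assumes "1 \<le> a"
    and g: "\<And>n. 0 \<le> g n" "g 0 = 0" "g sums 1"
    and v: "v 0 = 0" "summable (\<lambda>n. real n * v n)"
    and Q_nonneg: "\<And>n u. 1 \<le> u \<Longrightarrow> 0 \<le> Q n u"
    and Q_sum: "((\<lambda>(n, u). Q n u) has_sum PQ) (UNIV \<times> {1..})"
    and E6: "\<And>u. 1 \<le> u \<Longrightarrow>
       Q 0 u = (1 - lam) * Q 0 (u + 1) + (1 - lam) * ((\<Sum>m=a..b. p 0 m 1) + \<delta> * Q 0 1) * v u"
    and E7: "\<And>n u. 1 \<le> n \<Longrightarrow> n \<le> a - 1 \<Longrightarrow> 1 \<le> u \<Longrightarrow>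
       Q n u = (1 - lam) * Q n (u + 1) + lam * (\<Sum>i=1..n. g i * Q (n - i) (u + 1))
         + v u * ((1 - lam) * ((\<Sum>m=a..b. p n m 1) + \<delta> * Q n 1)
                  + lam * (\<Sum>i=1..n. g i * ((\<Sum>m=a..b. p (n - i) m 1) + \<delta> * Q (n - i) 1)))"
    and E8: "\<And>n u. a \<le> n \<Longrightarrow> 1 \<le> u \<Longrightarrow>
       Q n u = (1 - lam) * Q n (u + 1) + lam * (\<Sum>i=1..n. g i * Q (n - i) (u + 1))"
  shows "PQ = (\<Sum>n=0..a-1. pplus a b lam g 1 p n + \<delta> * Qplus lam g 1 Q n) * mean_of v"
proof -
  define d where
    "d n = (if n \<in> {0..a-1} then pplus a b lam g 1 p n + \<delta> * Qplus lam g 1 Q n else 0)" for n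
  have d_sums: "d sums (\<Sum>n=0..a-1. pplus a b lam g 1 p n + \<delta> * Qplus lam g 1 Q n)"
    unfolding d_def by (rule sums_If_finite_set) simp
  have rec: "Q n u = (1 - lam) * Q n (Suc u) + lam * (\<Sum>i=1..n. g i * Q (n - i) (Suc u)) + v u * d n"
    if "1 \<le> u" for n u
  proof -
    consider "n = 0" | "1 \<le> n" "n \<le> a - 1" | "a \<le> n"
      using \<open>1 \<le> a\<close> by linarith
    then show ?thesis
    proof cases
      case 1
      then show ?thesis
        using E6[OF that] by (simp add: d_def pplus_one_eq Qplus_def algebra_simps)
    next
      case 2
      then show ?thesis
        using E7[OF 2 that]
        by (simp add: d_def pplus_one_eq Qplus_def algebra_simps sum.distrib sum_distrib_left)
    next
      case 3
      then show ?thesis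
        using E8[OF 3 that] \<open>1 \<le> a\<close> by (simp add: d_def)
    qed
  qed
  have "PQ = suminf d * mean_of v"
    using g v Q_nonneg Q_sum sums_summable[OF d_sums] rec by (rule has_sum_residual_recursion)
  with d_sums show ?thesis
    by (simp add: sums_iff)
qed

lemma summable_pplus:
  fixes p :: "nat \<Rightarrow> nat \<Rightarrow> nat \<Rightarrow> real" and g :: "nat \<Rightarrow> real"
  assumes g: "\<And>n. 0 \<le> g n" "g 0 = 0" "g sums 1"
    and p_nonneg: "\<And>n r u. a \<le> r \<Longrightarrow> r \<le> b \<Longrightarrow> 1 \<le> u \<Longrightarrow> 0 \<le> p n r u"
    and p_sum: "((\<lambda>(n, r, u). p n r u) has_sum PB) (UNIV \<times> {a..b} \<times> {1..})"
  shows "summable (pplus a b lam g \<tau> p)"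
proof -
  obtain W where W: "\<And>r. r \<in> {a..b} \<Longrightarrow> ((\<lambda>(n, u). p n r u) has_sum W r) (UNIV \<times> {1..})"
    using has_sum_split_finite_middle[OF p_sum] by blast
  have "summable (\<lambda>n. (1 - lam) * p n r 1 + lam * (\<Sum>i=1..n. g i * p (n - i) r 1))"
    if "r \<in> {a..b}" for r
    using that p_nonneg has_sum_columns(1)[OF W]
    by (intro sums_summable[OF sums_arrival_step] g) auto
  then show ?thesis
    unfolding pplus_def by (intro summable_sum summable_mult)
qed

lemma summable_Qplus:
  fixes Q :: "nat \<Rightarrow> nat \<Rightarrow> real" and g :: "nat \<Rightarrow> real"
  assumes g: "\<And>n. 0 \<le> g n" "g 0 = 0" "g sums 1"
    and Q_nonneg: "\<And>n u. 1 \<le> u \<Longrightarrow> 0 \<le> Q n u"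
    and Q_sum: "((\<lambda>(n, u). Q n u) has_sum PQ) (UNIV \<times> {1..})"
  shows "summable (Qplus lam g \<tau> Q)"
  unfolding Qplus_def using Q_nonneg has_sum_columns(1)[OF Q_sum]
  by (intro summable_mult sums_summable[OF sums_arrival_step] g) auto

lemma tau_of_bounds:
  fixes p :: "nat \<Rightarrow> nat \<Rightarrow> nat \<Rightarrow> real" and Q :: "nat \<Rightarrow> nat \<Rightarrow> real"
  assumes p_nonneg: "\<And>n r u. a \<le> r \<Longrightarrow> r \<le> b \<Longrightarrow> 1 \<le> u \<Longrightarrow> 0 \<le> p n r u"
    and Q_nonneg: "\<And>n u. 1 \<le> u \<Longrightarrow> 0 \<le> Q n u"
    and p_sum: "((\<lambda>(n, r, u). p n r u) has_sum PB) (UNIV \<times> {a..b} \<times> {1..})"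
    and Q_sum: "((\<lambda>(n, u). Q n u) has_sum PQ) (UNIV \<times> {1..})"
  shows "0 \<le> tau_of a b p Q" and "tau_of a b p Q \<le> PB + PQ"
proof -
  obtain W where W: "\<And>r. r \<in> {a..b} \<Longrightarrow> ((\<lambda>(n, u). p n r u) has_sum W r) (UNIV \<times> {1..})"
    and PB: "PB = sum W {a..b}"
    using has_sum_split_finite_middle[OF p_sum] by blast
  have tau: "tau_of a b p Q = (\<Sum>r=a..b. \<Sum>m. p m r 1) + (\<Sum>m. Q m 1)"
    unfolding tau_of_def using has_sum_columns(1)[OF W] by (subst suminf_sum) auto
  show "0 \<le> tau_of a b p Q"
    unfolding tau using p_nonneg Q_nonneg has_sum_columns(1)[OF W] has_sum_columns(1)[OF Q_sum]
    by (intro add_nonneg_nonneg sum_nonneg suminf_nonneg) auto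
  have "(\<Sum>r=a..b. \<Sum>m. p m r 1) \<le> PB"
    unfolding PB using p_nonneg W by (intro sum_mono has_sum_columns_first_le) auto
  moreover have "(\<Sum>m. Q m 1) \<le> PQ"
    using Q_nonneg Q_sum by (rule has_sum_columns_first_le)
  ultimately show "tau_of a b p Q \<le> PB + PQ"
    unfolding tau by simp
qed

lemma omega_of_mult_tau:
  fixes a b :: nat and lam \<delta> :: real and g :: "nat \<Rightarrow> real" and s :: "nat \<Rightarrow> nat \<Rightarrow> real"
    and p :: "nat \<Rightarrow> nat \<Rightarrow> nat \<Rightarrow> real" and Q :: "nat \<Rightarrow> nat \<Rightarrow> real"
  defines "A \<equiv> pplus a b lam g 1 p" and "B \<equiv> Qplus lam g 1 Q"
    and "H \<equiv> \<lambda>n. \<Sum>j=n..a-1. e_coef g j n * batch_start_mean a b g (\<lambda>r. mean_of (s r)) j"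
  assumes "tau_of a b p Q \<noteq> 0" and "summable A" and "summable B"
  shows "omega_of a b lam \<delta> g s v p Q * tau_of a b p Q =
      (\<Sum>n=0..a-1. (A n + \<delta> * B n) * mean_of v + (1 - \<delta>) * B n * H n)
      + (\<Sum>n=a..b. (A n + B n) * mean_of (s n))
      + (\<Sum>k. A (k + (b + 1)) + B (k + (b + 1))) * mean_of (s b)"
proof -
  define \<tau> where "\<tau> = tau_of a b p Q"
  have "\<tau> \<noteq> 0"
    using assms(4) by (simp add: \<tau>_def)
  have pp: "pplus a b lam g \<tau> p n = A n / \<tau>" for n
    unfolding A_def pplus_def by (simp add: sum_divide_distrib)
  have qp: "Qplus lam g \<tau> Q n = B n / \<tau>" for n
    unfolding B_def Qplus_def by simp
  have AB: "summable (\<lambda>k. A (k + (b + 1)) + B (k + (b + 1)))"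
    using assms(5,6) by (intro summable_add summable_ignore_initial_segment)
  have "(\<Sum>k. (A (k + (b + 1)) / \<tau> + B (k + (b + 1)) / \<tau>) * mean_of (s b))
      = (\<Sum>k. (A (k + (b + 1)) + B (k + (b + 1))) * (mean_of (s b) / \<tau>))"
    by (intro suminf_cong) (simp add: add_divide_distrib [symmetric])
  also have "\<dots> = (\<Sum>k. A (k + (b + 1)) + B (k + (b + 1))) * (mean_of (s b) / \<tau>)"
    by (rule suminf_mult2 [OF AB, symmetric])
  finally have omega: "omega_of a b lam \<delta> g s v p Q =
      (\<Sum>n=0..a-1. A n / \<tau> * mean_of v + \<delta> * (B n / \<tau>) * mean_of v + (1 - \<delta>) * (B n / \<tau>) * H n)
      + (\<Sum>n=a..b. (A n / \<tau> + B n / \<tau>) * mean_of (s n))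
      + (\<Sum>k. A (k + (b + 1)) + B (k + (b + 1))) * (mean_of (s b) / \<tau>)"
    unfolding omega_of_def Let_def \<tau>_def [symmetric] pp qp H_def batch_start_mean_def by simp
  have "(\<Sum>n=0..a-1. A n / \<tau> * mean_of v + \<delta> * (B n / \<tau>) * mean_of v + (1 - \<delta>) * (B n / \<tau>) * H n) * \<tau>
      = (\<Sum>n=0..a-1. (A n + \<delta> * B n) * mean_of v + (1 - \<delta>) * B n * H n)"
    unfolding sum_distrib_right using \<open>\<tau> \<noteq> 0\<close> by (intro sum.cong refl) (simp add: field_simps)
  moreover have "(\<Sum>n=a..b. (A n / \<tau> + B n / \<tau>) * mean_of (s n)) * \<tau>
      = (\<Sum>n=a..b. (A n + B n) * mean_of (s n))"
    unfolding sum_distrib_right using \<open>\<tau> \<noteq> 0\<close> by (intro sum.cong refl) (simp add: field_simps)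
  ultimately show ?thesis
    unfolding omega \<tau>_def [symmetric] using \<open>\<tau> \<noteq> 0\<close> by (simp add: distrib_right)
qed

theorem lemma2:
  fixes a b :: nat
    and lam \<delta> :: real
    and g :: "nat \<Rightarrow> real"
    and s :: "nat \<Rightarrow> nat \<Rightarrow> real"
    and v :: "nat \<Rightarrow> real"
    and p0 :: "nat \<Rightarrow> real"
    and p :: "nat \<Rightarrow> nat \<Rightarrow> nat \<Rightarrow> real"
    and Q :: "nat \<Rightarrow> nat \<Rightarrow> real"
    and PB PQ :: real
  assumes ab: "1 \<le> a" "a \<le> b"
    and lam: "0 < lam" "lam < 1"
    and delta: "\<delta> = 0 \<or> \<delta> = 1"
    and g_nonneg: "\<And>m. 0 \<le> g m" and g0: "g 0 = 0" and g_sum: "g sums 1"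
    and g_mean: "summable (\<lambda>m. real m * g m)"
    and s_nonneg: "\<And>r n. a \<le> r \<Longrightarrow> r \<le> b \<Longrightarrow> 0 \<le> s r n"
    and s0: "\<And>r. a \<le> r \<Longrightarrow> r \<le> b \<Longrightarrow> s r 0 = 0"
    and s_sum: "\<And>r. a \<le> r \<Longrightarrow> r \<le> b \<Longrightarrow> s r sums 1"
    and s_mean: "\<And>r. a \<le> r \<Longrightarrow> r \<le> b \<Longrightarrow> summable (\<lambda>n. real n * s r n)"
    and v_nonneg: "\<And>n. 0 \<le> v n" and v0: "v 0 = 0" and v_sum: "v sums 1"
    and v_mean: "summable (\<lambda>n. real n * v n)"
    and rho: "lam * mean_of g / (real b * (1 / mean_of (s b))) < 1"
    and p0_nonneg: "\<And>n. n \<le> a - 1 \<Longrightarrow> 0 \<le> p0 n"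
    and p_nonneg: "\<And>n r u. a \<le> r \<Longrightarrow> r \<le> b \<Longrightarrow> 1 \<le> u \<Longrightarrow> 0 \<le> p n r u"
    and Q_nonneg: "\<And>n u. 1 \<le> u \<Longrightarrow> 0 \<le> Q n u"
    and E1: "p0 0 = (1 - \<delta>) * ((1 - lam) * p0 0 + (1 - lam) * Q 0 1)"
    and E2: "\<And>n. 1 \<le> n \<Longrightarrow> n \<le> a - 1 \<Longrightarrow>
       p0 n = (1 - \<delta>) * ((1 - lam) * p0 n + lam * (\<Sum>i=1..n. g i * p0 (n - i))
                + (1 - lam) * Q n 1 + lam * (\<Sum>i=1..n. g i * Q (n - i) 1))"
    and E3: "\<And>r u. a \<le> r \<Longrightarrow> r \<le> b \<Longrightarrow> 1 \<le> u \<Longrightarrow>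
       p 0 r u = (1 - lam) * p 0 r (u + 1)
         + s r u * ((\<Sum>m=a..b. (1 - lam) * p r m 1 + lam * (\<Sum>i=1..r. g i * p (r - i) m 1))
                    + (1 - lam) * Q r 1 + lam * (\<Sum>i=1..r. g i * Q (r - i) 1)
                    + (1 - \<delta>) * lam * (\<Sum>i=0..a-1. g (r - i) * p0 i))"
    and E4: "\<And>n r u. 1 \<le> n \<Longrightarrow> a \<le> r \<Longrightarrow> r \<le> b - 1 \<Longrightarrow> 1 \<le> u \<Longrightarrow>
       p n r u = (1 - lam) * p n r (u + 1) + lam * (\<Sum>i=1..n. g i * p (n - i) r (u + 1))"
    and E5: "\<And>n u. 1 \<le> n \<Longrightarrow> 1 \<le> u \<Longrightarrow>
       p n b u = (1 - lam) * p n b (u + 1) + lam * (\<Sum>i=1..n. g i * p (n - i) b (u + 1))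
         + s b u * ((\<Sum>m=a..b. (1 - lam) * p (n + b) m 1
                        + lam * (\<Sum>i=1..n+b. g i * p (n + b - i) m 1))
                    + (1 - lam) * Q (n + b) 1 + lam * (\<Sum>i=1..n+b. g i * Q (n + b - i) 1)
                    + (1 - \<delta>) * lam * (\<Sum>i=0..a-1. g (n + b - i) * p0 i))"
    and E6: "\<And>u. 1 \<le> u \<Longrightarrow>
       Q 0 u = (1 - lam) * Q 0 (u + 1) + (1 - lam) * ((\<Sum>m=a..b. p 0 m 1) + \<delta> * Q 0 1) * v u"
    and E7: "\<And>n u. 1 \<le> n \<Longrightarrow> n \<le> a - 1 \<Longrightarrow> 1 \<le> u \<Longrightarrow>
       Q n u = (1 - lam) * Q n (u + 1) + lam * (\<Sum>i=1..n. g i * Q (n - i) (u + 1))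
         + v u * ((1 - lam) * ((\<Sum>m=a..b. p n m 1) + \<delta> * Q n 1)
                  + lam * (\<Sum>i=1..n. g i * ((\<Sum>m=a..b. p (n - i) m 1) + \<delta> * Q (n - i) 1)))"
    and E8: "\<And>n u. a \<le> n \<Longrightarrow> 1 \<le> u \<Longrightarrow>
       Q n u = (1 - lam) * Q n (u + 1) + lam * (\<Sum>i=1..n. g i * Q (n - i) (u + 1))"
    and N_busy: "((\<lambda>(n, r, u). p n r u) has_sum PB) (UNIV \<times> {a..b} \<times> {1..})"
    and N_vac: "((\<lambda>(n, u). Q n u) has_sum PQ) (UNIV \<times> {1..})"
    and N: "(1 - \<delta>) * (\<Sum>n=0..a-1. p0 n) + PB + PQ = 1"
  shows "tau_of a b p Q = (1 - (1 - \<delta>) * (\<Sum>n=0..a-1. p0 n)) / omega_of a b lam \<delta> g s v p Q"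
proof -
  define A where "A = pplus a b lam g 1 p"
  define B where "B = Qplus lam g 1 Q"
  define D where "D r = lam * (\<Sum>i=0..a-1. g (r - i) * p0 i)" for r
  define H where
    "H n = (\<Sum>j=n..a-1. e_coef g j n * batch_start_mean a b g (\<lambda>r. mean_of (s r)) j)" for n
  have g: "\<And>n. 0 \<le> g n" "g 0 = 0" "g sums 1"
    by (fact g_nonneg g0 g_sum)+
  have A_summable: "summable A"
    unfolding A_def using g p_nonneg N_busy by (rule summable_pplus)
  have B_summable: "summable B"
    unfolding B_def using g Q_nonneg N_vac by (rule summable_Qplus)
  have D_summable: "summable D"
    unfolding D_def by (intro summable_mult summable_finite_convolution sums_summable[OF g_sum])
  have PB: "PB = (\<Sum>r=a..b. (A r + B r + (1 - \<delta>) * D r) * mean_of (s r))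
      + (\<Sum>k. A (k + (b + 1)) + B (k + (b + 1)) + (1 - \<delta>) * D (k + (b + 1))) * mean_of (s b)"
  proof (rule busy_mass_formula[OF ab(2) g s0 s_mean p_nonneg N_busy])
    show "summable (\<lambda>r. A r + B r + (1 - \<delta>) * D r)"
      using A_summable B_summable D_summable by (intro summable_add summable_mult)
  next
    fix r u :: nat assume "a \<le> r" "r \<le> b" "1 \<le> u"
    then show "p 0 r u = (1 - lam) * p 0 r (u + 1) + s r u * (A r + B r + (1 - \<delta>) * D r)"
      using E3[of r u] by (simp add: A_def B_def D_def pplus_def Qplus_def mult.assoc)
  next
    fix n r u :: nat assume "1 \<le> n" "a \<le> r" "r < b" "1 \<le> u"
    then show "p n r u = (1 - lam) * p n r (u + 1) + lam * (\<Sum>i=1..n. g i * p (n - i) r (u + 1))"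
      by (intro E4) simp_all
  next
    fix n u :: nat assume "1 \<le> n" "1 \<le> u"
    then show "p n b u = (1 - lam) * p n b (u + 1) + lam * (\<Sum>i=1..n. g i * p (n - i) b (u + 1))
        + s b u * (A (n + b) + B (n + b) + (1 - \<delta>) * D (n + b))"
      using E5[of n u] by (simp add: A_def B_def D_def pplus_def Qplus_def mult.assoc)
  qed
  have PQ: "PQ = (\<Sum>n=0..a-1. A n + \<delta> * B n) * mean_of v"
    unfolding A_def B_def using ab(1) g v0 v_mean Q_nonneg N_vac E6 E7 E8
    by (rule vacation_mass_formula)
  have dormant: "(1 - \<delta>) * ((\<Sum>r=a..b. D r * mean_of (s r)) + (\<Sum>k. D (k + (b + 1))) * mean_of (s b))
      = (1 - \<delta>) * (\<Sum>n=0..a-1. B n * H n)"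
  proof (cases "\<delta> = 0")
    case True
    have "lam * p0 j = (\<Sum>i=1..j. g i * (lam * p0 (j - i))) + B j" if "j \<le> a - 1" for j
      unfolding B_def using True E1 E2 that by (rule single_vacation_renewal)
    from dormant_exit_mean[OF ab(2) sums_summable[OF g_sum] this, of "\<lambda>r. mean_of (s r)"]
    show ?thesis
      unfolding D_def H_def by (simp add: sum_distrib_left sum_distrib_right mult_ac)
  qed (use delta in simp)
  have PB_split: "PB = (\<Sum>r=a..b. (A r + B r) * mean_of (s r))
      + (\<Sum>k. A (k + (b + 1)) + B (k + (b + 1))) * mean_of (s b)
      + (1 - \<delta>) * ((\<Sum>r=a..b. D r * mean_of (s r)) + (\<Sum>k. D (k + (b + 1))) * mean_of (s b))"
  proof -
    have AB: "summable (\<lambda>k. A (k + (b + 1)) + B (k + (b + 1)))"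
      using A_summable B_summable by (intro summable_add summable_ignore_initial_segment)
    have D: "summable (\<lambda>k. D (k + (b + 1)))"
      using D_summable by (rule summable_ignore_initial_segment)
    have tail: "(\<Sum>k. A (k + (b + 1)) + B (k + (b + 1)) + (1 - \<delta>) * D (k + (b + 1)))
        = (\<Sum>k. A (k + (b + 1)) + B (k + (b + 1))) + (1 - \<delta>) * (\<Sum>k. D (k + (b + 1)))"
      using suminf_add[OF AB summable_mult[OF D]] suminf_mult[OF D] by simp
    have busy: "(\<Sum>r=a..b. (A r + B r + (1 - \<delta>) * D r) * mean_of (s r))
        = (\<Sum>r=a..b. (A r + B r) * mean_of (s r)) + (1 - \<delta>) * (\<Sum>r=a..b. D r * mean_of (s r))"
      by (simp add: distrib_right sum.distrib sum_distrib_left mult.assoc)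
    show ?thesis
      unfolding PB tail busy by (simp add: ring_distribs(1,2))
  qed
  have mass: "PB + PQ =
      (\<Sum>n=0..a-1. (A n + \<delta> * B n) * mean_of v + (1 - \<delta>) * B n * H n)
      + (\<Sum>n=a..b. (A n + B n) * mean_of (s n))
      + (\<Sum>k. A (k + (b + 1)) + B (k + (b + 1))) * mean_of (s b)"
  proof -
    have "(\<Sum>n=0..a-1. (A n + \<delta> * B n) * mean_of v + (1 - \<delta>) * B n * H n)
        = (\<Sum>n=0..a-1. (A n + \<delta> * B n) * mean_of v) + (\<Sum>n=0..a-1. (1 - \<delta>) * (B n * H n))"
      by (simp add: sum.distrib mult.assoc)
    also have "\<dots> = (\<Sum>n=0..a-1. A n + \<delta> * B n) * mean_of v + (1 - \<delta>) * (\<Sum>n=0..a-1. B n * H n)"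
      by (simp only: sum_distrib_left sum_distrib_right)
    finally show ?thesis
      unfolding PB_split PQ using dormant by linarith
  qed
  show ?thesis
  proof (cases "tau_of a b p Q = 0")
    case True
    \<comment> \<open>then pplus and Qplus divide by zero, so omega and the right-hand side vanish too\<close>
    then show ?thesis
      by (simp add: omega_of_def Let_def pplus_def Qplus_def)
  next
    case False
    have omega: "omega_of a b lam \<delta> g s v p Q * tau_of a b p Q = PB + PQ"
      using omega_of_mult_tau[where \<delta> = \<delta> and v = v, OF False] A_summable B_summable mass
      unfolding A_def B_def H_def by simp
    have "PB + PQ \<noteq> 0"
      using tau_of_bounds[OF p_nonneg Q_nonneg N_busy N_vac] False by linarith
    with omega have "omega_of a b lam \<delta> g s v p Q \<noteq> 0"
      by auto
    moreover have "1 - (1 - \<delta>) * (\<Sum>n=0..a-1. p0 n) = PB + PQ"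
      using N by linarith
    ultimately show ?thesis
      using omega by (simp add: eq_divide_eq mult.commute)
  qed
qed

end
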